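(* Let $(\mathbf{X}^0,\mathbf{p})$ be a pEF1 $\{1,k\}$-payment equilibrium that is not $(2-1/k)$-pEFX. Then there exists an integer $z<k$ such that $p(X^0_j)\in\{z,z+1\}$ for every agent $j\in N_L$, and $p(X^0_i)\in[k,k+z]$ for every agent $i\in N_H$.
   Context: Fix $k>1$. Agents $N$, chores $M$, additive costs $c_i(e)\in\{1,k\}$. An allocation partitions $M$ into bundles. A payment vector assigns $p(e)>0$, $p(X)=\sum_{e\in X}p(e)$; $\alpha_{i,e}=c_i(e)/p(e)$, $\alpha_i=\min_e\alpha_{i,e}$, $\mathsf{MPB}_i=\{e:\alpha_{i,e}=\alpha_i\}$; $(\mathbf{X},\mathbf{p})$ is a $\{1,k\}$-payment equilibrium if $X_i\subseteq\mathsf{MPB}_i$ for all $i$ and $p(e)\in\{1,k\}$ for all $e$. It is pEF1 if for all $i,j$, $X_i=\emptyset$ or some $e\in X_i$ has $p(X_i\setminus\{e\})\le p(X_j)$; it is $\beta$-pEFX if for all $i,j$, $X_i=\emptyset$ or $p(X_i\setminus\{e\})\le\beta\,p(X_j)$ for all $e\in X_i$. $L=\{e:p(e)=1\}$, $H=\{e:p(e)=k\}$, $N_L=\{i:X^0_i\subseteq L\}$, $N_H=\{i:|X^0_i\cap H|\ge1\}$. *)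

theory Defs
  imports Complex_Main
begin

definition is_allocation :: "'a set \<Rightarrow> 'b set \<Rightarrow> ('a \<Rightarrow> 'b set) \<Rightarrow> bool" where
  "is_allocation N M X \<longleftrightarrow>
     (\<Union>i\<in>N. X i) = M \<and> (\<forall>i\<in>N. \<forall>j\<in>N. i \<noteq> j \<longrightarrow> X i \<inter> X j = {})"

definition pay :: "('b \<Rightarrow> real) \<Rightarrow> 'b set \<Rightarrow> real" where
  "pay p S = (\<Sum>e\<in>S. p e)"

definition alpha :: "'b set \<Rightarrow> ('a \<Rightarrow> 'b \<Rightarrow> real) \<Rightarrow> ('b \<Rightarrow> real) \<Rightarrow> 'a \<Rightarrow> real" where
  "alpha M c p i = Min ((\<lambda>e. c i e / p e) ` M)"

definition MPB :: "'b set \<Rightarrow> ('a \<Rightarrow> 'b \<Rightarrow> real) \<Rightarrow> ('b \<Rightarrow> real) \<Rightarrow> 'a \<Rightarrow> 'b set" where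
  "MPB M c p i = {e \<in> M. c i e / p e = alpha M c p i}"

definition one_k_payment_equilibrium ::
  "real \<Rightarrow> 'a set \<Rightarrow> 'b set \<Rightarrow> ('a \<Rightarrow> 'b \<Rightarrow> real) \<Rightarrow> ('a \<Rightarrow> 'b set) \<Rightarrow> ('b \<Rightarrow> real) \<Rightarrow> bool" where
  "one_k_payment_equilibrium k N M c X p \<longleftrightarrow>
     is_allocation N M X \<and> (\<forall>e\<in>M. p e > 0) \<and>
     (\<forall>i\<in>N. X i \<subseteq> MPB M c p i) \<and> (\<forall>e\<in>M. p e \<in> {1, k})"

definition pEF1 :: "'a set \<Rightarrow> ('a \<Rightarrow> 'b set) \<Rightarrow> ('b \<Rightarrow> real) \<Rightarrow> bool" where
  "pEF1 N X p \<longleftrightarrow> (\<forall>i\<in>N. \<forall>j\<in>N. X i = {} \<or>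
      (\<exists>e\<in>X i. pay p (X i - {e}) \<le> pay p (X j)))"

definition pEFX :: "real \<Rightarrow> 'a set \<Rightarrow> ('a \<Rightarrow> 'b set) \<Rightarrow> ('b \<Rightarrow> real) \<Rightarrow> bool" where
  "pEFX \<beta> N X p \<longleftrightarrow> (\<forall>i\<in>N. \<forall>j\<in>N. X i = {} \<or>
      (\<forall>e\<in>X i. pay p (X i - {e}) \<le> \<beta> * pay p (X j)))"

definition low_chores :: "'b set \<Rightarrow> ('b \<Rightarrow> real) \<Rightarrow> 'b set" where
  "low_chores M p = {e \<in> M. p e = 1}"

definition high_chores :: "real \<Rightarrow> 'b set \<Rightarrow> ('b \<Rightarrow> real) \<Rightarrow> 'b set" where
  "high_chores k M p = {e \<in> M. p e = k}"

definition N_L :: "'a set \<Rightarrow> 'b set \<Rightarrow> ('a \<Rightarrow> 'b set) \<Rightarrow> ('b \<Rightarrow> real) \<Rightarrow> 'a set" where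
  "N_L N M X p = {i \<in> N. X i \<subseteq> low_chores M p}"

definition N_H :: "real \<Rightarrow> 'a set \<Rightarrow> 'b set \<Rightarrow> ('a \<Rightarrow> 'b set) \<Rightarrow> ('b \<Rightarrow> real) \<Rightarrow> 'a set" where
  "N_H k N M X p = {i \<in> N. card (X i \<inter> high_chores k M p) \<ge> 1}"

end

theory Submission
  imports Defs
begin

(*
  Take a bundle of minimum payment m. If m \<ge> k, a pEFX violation pay(X_i - e) > (2 - 1/k) m
  exceeds m + k - 1, while pEF1 against the minimum bundle gives pay(X_i - e') \<le> m;
  the two removed chores would differ in payment by more than k - 1, impossible for
  payments in {1, k}. Hence m < k, so the minimum bundle consists of chores of payment 1
  and m = z is an integer. pEF1 against it then bounds every bundle from above by z plus
  the payment of one chore: z + 1 on N_L and k + z on N_H.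
  Only the payments matter.
*)

lemma pay_remove:
  assumes "finite S" and "e \<in> S"
  shows "pay p (S - {e}) = pay p S - p e"
  using assms by (simp add: pay_def sum_diff1)

lemma pay_eq_card:
  assumes "\<forall>e\<in>S. p e = 1"
  shows "pay p S = real (card S)"
  using assms by (simp add: pay_def)

lemma pEF1_pay_le:
  assumes "pEF1 N X p" and "i \<in> N" and "j \<in> N" and "X i \<noteq> {}" and "finite (X i)"
    and "\<forall>e\<in>X i. p e \<le> b"
  shows "pay p (X i) \<le> pay p (X j) + b"
proof -
  obtain e where "e \<in> X i" and "pay p (X i - {e}) \<le> pay p (X j)"
    using assms(1-4) unfolding pEF1_def by blast
  then show ?thesis
    using assms(5,6) pay_remove[of "X i" e p] by fastforce
qed

locale one_k_payments =
  fixes k :: real and N :: "'a set" and M :: "'b set"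
    and X :: "'a \<Rightarrow> 'b set" and p :: "'b \<Rightarrow> real"
  assumes k_gt_1: "k > 1"
    and finite_chores: "finite M"
    and allocation: "is_allocation N M X"
    and payment_values: "\<forall>e\<in>M. p e \<in> {1, k}"
begin

lemma bundle_subset: "i \<in> N \<Longrightarrow> X i \<subseteq> M"
  using allocation unfolding is_allocation_def by blast

lemma finite_bundle: "i \<in> N \<Longrightarrow> finite (X i)"
  using bundle_subset finite_chores finite_subset by blast

lemma payment_cases: "i \<in> N \<Longrightarrow> e \<in> X i \<Longrightarrow> p e = 1 \<or> p e = k"
  using bundle_subset payment_values by blast

lemma payment_ge_1: "i \<in> N \<Longrightarrow> e \<in> X i \<Longrightarrow> 1 \<le> p e"
  using payment_cases k_gt_1 by fastforce

lemma payment_le_k: "i \<in> N \<Longrightarrow> e \<in> X i \<Longrightarrow> p e \<le> k"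
  using payment_cases k_gt_1 by fastforce

lemma pay_subset_le:
  assumes "i \<in> N" and "S \<subseteq> X i"
  shows "pay p S \<le> pay p (X i)"
  unfolding pay_def
  using assms finite_bundle payment_ge_1 by (fastforce intro: sum_mono2)

lemma payment_le_pay: "i \<in> N \<Longrightarrow> e \<in> X i \<Longrightarrow> p e \<le> pay p (X i)"
  using pay_subset_le[of i "{e}"] by (simp add: pay_def)

lemma pay_less_k_imp_N_L:
  assumes "i \<in> N" and "pay p (X i) < k"
  shows "i \<in> N_L N M X p"
proof -
  have "p e = 1" if "e \<in> X i" for e
    using payment_cases[OF assms(1) that] payment_le_pay[OF assms(1) that] assms(2) by auto
  then show ?thesis
    using assms(1) bundle_subset unfolding N_L_def low_chores_def by blast
qed

lemma N_L_pay_eq_card: "i \<in> N_L N M X p \<Longrightarrow> pay p (X i) = real (card (X i))"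
  unfolding N_L_def low_chores_def by (intro pay_eq_card) blast

lemma N_H_has_high_chore:
  assumes "i \<in> N_H k N M X p"
  obtains h where "h \<in> X i" and "p h = k"
proof -
  have "X i \<inter> high_chores k M p \<noteq> {}"
    using assms unfolding N_H_def by fastforce
  then show ?thesis
    using that unfolding high_chores_def by blast
qed

lemma min_pay_less_k:
  assumes "pEF1 N X p" and "\<not> pEFX (2 - 1 / k) N X p"
    and "j0 \<in> N" and j0_min: "\<forall>j\<in>N. pay p (X j0) \<le> pay p (X j)"
  shows "pay p (X j0) < k"
proof (rule ccontr)
  define m where "m = pay p (X j0)"
  assume "\<not> pay p (X j0) < k"
  then have "k \<le> m"
    by (simp add: m_def)
  obtain i j e where "i \<in> N" "j \<in> N" "e \<in> X i"
    and violation: "(2 - 1 / k) * pay p (X j) < pay p (X i - {e})"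
    using assms(2) unfolding pEFX_def by force
  obtain e' where "e' \<in> X i" and "pay p (X i - {e'}) \<le> m"
    using assms(1) \<open>i \<in> N\<close> \<open>j0 \<in> N\<close> \<open>e \<in> X i\<close> unfolding pEF1_def m_def by blast
  then have pEF1_bound: "pay p (X i) \<le> m + k"
    using pay_remove[OF finite_bundle] payment_le_k \<open>i \<in> N\<close> by fastforce
  have "(1 - 1 / k) * k \<le> (1 - 1 / k) * m"
    using \<open>k \<le> m\<close> k_gt_1 by (intro mult_left_mono) auto
  then have "m + (k - 1) \<le> (2 - 1 / k) * m"
    using k_gt_1 by (simp add: algebra_simps)
  also have "\<dots> \<le> (2 - 1 / k) * pay p (X j)"
    using j0_min \<open>j \<in> N\<close> k_gt_1 unfolding m_def
    by (intro mult_left_mono) (auto simp: field_simps)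
  also have "\<dots> < pay p (X i) - p e"
    using violation pay_remove[OF finite_bundle] \<open>i \<in> N\<close> \<open>e \<in> X i\<close> by simp
  also have "\<dots> \<le> m + (k - 1)"
    using pEF1_bound payment_ge_1 \<open>i \<in> N\<close> \<open>e \<in> X i\<close> by fastforce
  finally show False
    by simp
qed

lemma N_L_card_cases:
  assumes "pEF1 N X p" and "j0 \<in> N_L N M X p" and "j \<in> N_L N M X p"
    and "pay p (X j0) \<le> pay p (X j)"
  shows "card (X j) = card (X j0) \<or> card (X j) = Suc (card (X j0))"
proof -
  have "j0 \<in> N" "j \<in> N" and low: "\<forall>e\<in>X j. p e = 1"
    using assms(2,3) unfolding N_L_def low_chores_def by auto
  have "card (X j0) \<le> card (X j)"
    using assms(4) N_L_pay_eq_card[OF assms(2)] N_L_pay_eq_card[OF assms(3)] by simp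
  moreover have "card (X j) \<le> Suc (card (X j0))"
  proof (cases "X j = {}")
    case False
    then have "pay p (X j) \<le> pay p (X j0) + 1"
      using low finite_bundle[OF \<open>j \<in> N\<close>]
      by (intro pEF1_pay_le[OF assms(1) \<open>j \<in> N\<close> \<open>j0 \<in> N\<close> False]) auto
    then show ?thesis
      using N_L_pay_eq_card[OF assms(2)] N_L_pay_eq_card[OF assms(3)] by simp
  qed simp
  ultimately show ?thesis
    by linarith
qed

lemma N_H_pay_bounds:
  assumes "pEF1 N X p" and "i \<in> N_H k N M X p" and "j \<in> N"
  shows "k \<le> pay p (X i) \<and> pay p (X i) \<le> k + pay p (X j)"
proof -
  obtain h where "h \<in> X i" and "p h = k"
    using N_H_has_high_chore[OF assms(2)] .
  moreover have "i \<in> N"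
    using assms(2) unfolding N_H_def by simp
  ultimately show ?thesis
    using payment_le_pay pEF1_pay_le[OF assms(1) _ assms(3)] finite_bundle payment_le_k
    by fastforce
qed

end

theorem corollary2:
  fixes k :: real and N :: "'a set" and M :: "'b set"
    and c :: "'a \<Rightarrow> 'b \<Rightarrow> real" and X :: "'a \<Rightarrow> 'b set" and p :: "'b \<Rightarrow> real"
  assumes "k > 1"
    and "finite N" and "finite M"
    and "\<forall>i\<in>N. \<forall>e\<in>M. c i e \<in> {1, k}"
    and "one_k_payment_equilibrium k N M c X p"
    and "pEF1 N X p"
    and "\<not> pEFX (2 - 1 / k) N X p"
  shows "\<exists>z::int. real_of_int z < k
           \<and> (\<forall>j\<in>N_L N M X p. pay p (X j) \<in> {real_of_int z, real_of_int z + 1})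
           \<and> (\<forall>i\<in>N_H k N M X p. k \<le> pay p (X i) \<and> pay p (X i) \<le> k + real_of_int z)"
proof -
  interpret one_k_payments k N M X p
    using assms(1,3,5) by unfold_locales (auto simp: one_k_payment_equilibrium_def)
  have "N \<noteq> {}"
    using assms(7) unfolding pEFX_def by blast
  then obtain j0 where "j0 \<in> N" and j0_min: "\<forall>j\<in>N. pay p (X j0) \<le> pay p (X j)"
    using ex_is_arg_min_if_finite[OF assms(2), of "\<lambda>j. pay p (X j)"]
    unfolding is_arg_min_def by (auto simp: not_less)
  have "pay p (X j0) < k"
    using min_pay_less_k[OF assms(6,7) \<open>j0 \<in> N\<close> j0_min] .
  then have "j0 \<in> N_L N M X p"
    using pay_less_k_imp_N_L \<open>j0 \<in> N\<close> by blast
  define z where "z = int (card (X j0))"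
  have pay_j0: "pay p (X j0) = real_of_int z"
    using N_L_pay_eq_card[OF \<open>j0 \<in> N_L N M X p\<close>] by (simp add: z_def)
  show ?thesis
  proof (intro exI[of _ z] conjI ballI)
    show "real_of_int z < k"
      using \<open>pay p (X j0) < k\<close> pay_j0 by simp
  next
    fix j assume "j \<in> N_L N M X p"
    then have "j \<in> N"
      unfolding N_L_def by simp
    then show "pay p (X j) \<in> {real_of_int z, real_of_int z + 1}"
      using N_L_card_cases[OF assms(6) \<open>j0 \<in> N_L N M X p\<close> \<open>j \<in> N_L N M X p\<close>] j0_min
        N_L_pay_eq_card[OF \<open>j \<in> N_L N M X p\<close>]
      by (auto simp: z_def)
  next
    fix i assume "i \<in> N_H k N M X p"
    then show "k \<le> pay p (X i)" and "pay p (X i) \<le> k + real_of_int z"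
      using N_H_pay_bounds[OF assms(6) _ \<open>j0 \<in> N\<close>] pay_j0 by auto
  qed
qed

end
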